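(* Let $T$ be a DAT with duration vector $d$, and let $\mathcal{O}\in\mathcal{S}_T$ be a successful attack. Then there exists an exact time assignment $f$ with $f_{\mathrm{R}_T}\le\mathrm{t}(\mathcal{O},d)$.
   Context: A dynamic attack tree (DAT) is a finite rooted directed acyclic graph $T=(N,E)$ (edges point from a node to its children) with root $\mathrm{R}_T$, in which each node $v$ has a type $\gamma(v)\in\{\mathtt{BAS},\mathtt{OR},\mathtt{AND},\mathtt{SAND}\}$, with $\gamma(v)=\mathtt{BAS}$ if and only if $v$ is a leaf. Every node of type $\mathtt{SAND}$ comes with a fixed linear ordering $v_1,\dots,v_n$ of its children, written $v=\mathtt{SAND}(v_1,\dots,v_n)$; similarly one writes $v=\mathtt{OR}(v_1,\dots,v_n)$, $v=\mathtt{AND}(v_1,\dots,v_n)$. $N_\gamma$ denotes the set of nodes of type $\gamma$. For a node $v$, $B_v$ is the set of nodes of type $\mathtt{BAS}$ that are descendants of $v$ (reachable from $v$ by a directed path, including $v$ itself). An attack on $T$ is a pair $\mathcal{O}=(A,\prec)$ where $A\subseteq N_{\mathtt{BAS}}$ and $\prec$ is a strict partial order on $A$. An attack $(A,\prec)$ reaches a node $v$, defined recursively: if $v\in N_{\mathtt{BAS}}$, iff $v\in A$; if $v=\mathtt{OR}(v_1,\dots,v_n)$, iff it reaches some $v_i$; if $v=\mathtt{AND}(v_1,\dots,v_n)$, iff it reaches all $v_i$; if $v=\mathtt{SAND}(v_1,\dots,v_n)$, iff it reaches all $v_i$ and for every $i<n$, every $a\in A\cap B_{v_i}$ and every $a'\in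 A\cap B_{v_{i+1}}$ one has $a\prec a'$. An attack is successful if it reaches $\mathrm{R}_T$; $\mathcal{S}_T$ is the set of successful attacks. A duration vector is $d\in\mathbb{R}_{\ge0}^{N_{\mathtt{BAS}}}$. For an attack $\mathcal{O}=(A,\prec)$, $\mathrm{t}(\mathcal{O},d)=\max_C\sum_{a\in C}d_a$, the maximum over all maximal chains $C$ of $(A,\prec)$ (equal to $0$ if $A=\varnothing$). Time assignments: for a node $v$ with ordered children $v_1,\dots,v_n$ and $i<n$, let $Z^v_i=B_{v_i}\times B_{v_{i+1}}$. A time assignment is a vector $f\in[0,\infty]^N$ such that: (1) $f_a\ge d_a$ for every $a\in N_{\mathtt{BAS}}$; (2) $f_v\ge\min_i f_{v_i}$ for every $v=\mathtt{OR}(v_1,\dots,v_n)$; (3) $f_v\ge\max_i f_{v_i}$ for every $v=\mathtt{AND}(v_1,\dots,v_n)$; (4) for every $v=\mathtt{SAND}(v_1,\dots,v_n)$: (a) $f_v\ge f_{v_n}$; (b) if $f_{v_i}=\infty$ for some $i\le n$ then $f_v=\infty$; (c) if there exist $i<n$ and $(a,a')\in Z^v_i$ with $f_{a'}-d_{a'}<f_a<\infty$, then $f_v=\infty$. A time assignment is exact if equality holds in (2) and (3) for all OR- and AND-nodes, and for every SAND-node $v$ for which neither the premise of (4b) nor the premise of (4c) holds, one has $f_v=f_{v_n}$. *)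

theory Defs
  imports "HOL-Library.Extended_Real"
begin

datatype gtype = BAS | OR | AND | SAND

definition edges :: "'n set \<Rightarrow> ('n \<Rightarrow> 'n list) \<Rightarrow> ('n \<times> 'n) set" where
  "edges N ch = {(v, c). v \<in> N \<and> c \<in> set (ch v)}"

definition dat :: "'n set \<Rightarrow> ('n \<Rightarrow> 'n list) \<Rightarrow> ('n \<Rightarrow> gtype) \<Rightarrow> 'n \<Rightarrow> bool" where
  "dat N ch gam R \<longleftrightarrow>
     finite N \<and> R \<in> N \<and>
     (\<forall>v\<in>N. set (ch v) \<subseteq> N \<and> distinct (ch v)) \<and>
     (\<forall>v\<in>N. gam v = BAS \<longleftrightarrow> ch v = []) \<and>
     acyclic (edges N ch) \<and>
     (\<forall>v\<in>N. (R, v) \<in> (edges N ch)\<^sup>*)"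

definition Bdesc :: "'n set \<Rightarrow> ('n \<Rightarrow> 'n list) \<Rightarrow> ('n \<Rightarrow> gtype) \<Rightarrow> 'n \<Rightarrow> 'n set" where
  "Bdesc N ch gam v = {b. (v, b) \<in> (edges N ch)\<^sup>* \<and> gam b = BAS}"

definition strict_po_on :: "'n set \<Rightarrow> ('n \<times> 'n) set \<Rightarrow> bool" where
  "strict_po_on A P \<longleftrightarrow> P \<subseteq> A \<times> A \<and> irrefl P \<and> trans P"

definition is_attack :: "'n set \<Rightarrow> ('n \<Rightarrow> gtype) \<Rightarrow> 'n set \<Rightarrow> ('n \<times> 'n) set \<Rightarrow> bool" where
  "is_attack N gam A P \<longleftrightarrow> A \<subseteq> {a\<in>N. gam a = BAS} \<and> strict_po_on A P"

text \<open>Reachability of a node by an attack (A, P); the recursive definition of the paper,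
rendered as an inductive predicate (well-defined since the graph is a finite DAG).\<close>
inductive reaches :: "'n set \<Rightarrow> ('n \<Rightarrow> 'n list) \<Rightarrow> ('n \<Rightarrow> gtype) \<Rightarrow> 'n set \<Rightarrow> ('n \<times> 'n) set \<Rightarrow> 'n \<Rightarrow> bool"
  for N ch gam A P where
  reach_BAS: "v \<in> N \<Longrightarrow> gam v = BAS \<Longrightarrow> v \<in> A \<Longrightarrow> reaches N ch gam A P v"
| reach_OR: "v \<in> N \<Longrightarrow> gam v = OR \<Longrightarrow> c \<in> set (ch v) \<Longrightarrow> reaches N ch gam A P c
     \<Longrightarrow> reaches N ch gam A P v"
| reach_AND: "v \<in> N \<Longrightarrow> gam v = AND \<Longrightarrow> (\<forall>c\<in>set (ch v). reaches N ch gam A P c)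
     \<Longrightarrow> reaches N ch gam A P v"
| reach_SAND: "v \<in> N \<Longrightarrow> gam v = SAND \<Longrightarrow> (\<forall>c\<in>set (ch v). reaches N ch gam A P c)
     \<Longrightarrow> (\<forall>i. Suc i < length (ch v) \<longrightarrow>
            (\<forall>a\<in>A \<inter> Bdesc N ch gam (ch v ! i). \<forall>a'\<in>A \<inter> Bdesc N ch gam (ch v ! Suc i). (a, a') \<in> P))
     \<Longrightarrow> reaches N ch gam A P v"

definition successful :: "'n set \<Rightarrow> ('n \<Rightarrow> 'n list) \<Rightarrow> ('n \<Rightarrow> gtype) \<Rightarrow> 'n \<Rightarrow> 'n set \<Rightarrow> ('n \<times> 'n) set \<Rightarrow> bool" where
  "successful N ch gam R A P \<longleftrightarrow> is_attack N gam A P \<and> reaches N ch gam A P R"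

definition is_chain :: "'n set \<Rightarrow> ('n \<times> 'n) set \<Rightarrow> 'n set \<Rightarrow> bool" where
  "is_chain A P C \<longleftrightarrow> C \<subseteq> A \<and> (\<forall>x\<in>C. \<forall>y\<in>C. x \<noteq> y \<longrightarrow> (x, y) \<in> P \<or> (y, x) \<in> P)"

definition is_max_chain :: "'n set \<Rightarrow> ('n \<times> 'n) set \<Rightarrow> 'n set \<Rightarrow> bool" where
  "is_max_chain A P C \<longleftrightarrow> is_chain A P C \<and> (\<forall>C'. is_chain A P C' \<and> C \<subseteq> C' \<longrightarrow> C' = C)"

text \<open>Attack duration t(O,d); for A empty the only maximal chain is the empty one, giving 0.\<close>
definition attack_time :: "'n set \<Rightarrow> ('n \<times> 'n) set \<Rightarrow> ('n \<Rightarrow> real) \<Rightarrow> real" where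
  "attack_time A P d = (if A = {} then 0 else Max {sum d C | C. is_max_chain A P C})"

definition is_duration :: "'n set \<Rightarrow> ('n \<Rightarrow> gtype) \<Rightarrow> ('n \<Rightarrow> real) \<Rightarrow> bool" where
  "is_duration N gam d \<longleftrightarrow> (\<forall>a\<in>N. gam a = BAS \<longrightarrow> 0 \<le> d a)"

text \<open>Premises of conditions (4b) and (4c) at a SAND node v.\<close>
definition sand_inf_child :: "('n \<Rightarrow> 'n list) \<Rightarrow> ('n \<Rightarrow> ereal) \<Rightarrow> 'n \<Rightarrow> bool" where
  "sand_inf_child ch f v \<longleftrightarrow> (\<exists>c\<in>set (ch v). f c = \<infinity>)"

definition sand_violation :: "'n set \<Rightarrow> ('n \<Rightarrow> 'n list) \<Rightarrow> ('n \<Rightarrow> gtype) \<Rightarrow> ('n \<Rightarrow> real)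
    \<Rightarrow> ('n \<Rightarrow> ereal) \<Rightarrow> 'n \<Rightarrow> bool" where
  "sand_violation N ch gam d f v \<longleftrightarrow>
     (\<exists>i. Suc i < length (ch v) \<and>
        (\<exists>a\<in>Bdesc N ch gam (ch v ! i). \<exists>a'\<in>Bdesc N ch gam (ch v ! Suc i).
            f a' - ereal (d a') < f a \<and> f a < \<infinity>))"

text \<open>Time assignment: f in [0,\<infinity>]^N (values outside N are irrelevant).\<close>
definition time_assignment :: "'n set \<Rightarrow> ('n \<Rightarrow> 'n list) \<Rightarrow> ('n \<Rightarrow> gtype) \<Rightarrow> ('n \<Rightarrow> real)
    \<Rightarrow> ('n \<Rightarrow> ereal) \<Rightarrow> bool" where
  "time_assignment N ch gam d f \<longleftrightarrow>
     (\<forall>v\<in>N. 0 \<le> f v) \<and>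
     (\<forall>a\<in>N. gam a = BAS \<longrightarrow> ereal (d a) \<le> f a) \<and>
     (\<forall>v\<in>N. gam v = OR \<longrightarrow> Min (f ` set (ch v)) \<le> f v) \<and>
     (\<forall>v\<in>N. gam v = AND \<longrightarrow> Max (f ` set (ch v)) \<le> f v) \<and>
     (\<forall>v\<in>N. gam v = SAND \<longrightarrow>
        f (last (ch v)) \<le> f v \<and>
        (sand_inf_child ch f v \<longrightarrow> f v = \<infinity>) \<and>
        (sand_violation N ch gam d f v \<longrightarrow> f v = \<infinity>))"

definition exact_time_assignment :: "'n set \<Rightarrow> ('n \<Rightarrow> 'n list) \<Rightarrow> ('n \<Rightarrow> gtype) \<Rightarrow> ('n \<Rightarrow> real)
    \<Rightarrow> ('n \<Rightarrow> ereal) \<Rightarrow> bool" where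
  "exact_time_assignment N ch gam d f \<longleftrightarrow>
     time_assignment N ch gam d f \<and>
     (\<forall>v\<in>N. gam v = OR \<longrightarrow> f v = Min (f ` set (ch v))) \<and>
     (\<forall>v\<in>N. gam v = AND \<longrightarrow> f v = Max (f ` set (ch v))) \<and>
     (\<forall>v\<in>N. gam v = SAND \<longrightarrow> \<not> sand_inf_child ch f v \<longrightarrow> \<not> sand_violation N ch gam d f v
        \<longrightarrow> f v = f (last (ch v)))"

end

theory Submission
  imports Defs
begin

text \<open>Give every BAS of the attack its completion time, the longest duration of a chain of the
attack ending in it, and every other BAS the time \<infinity>; then propagate these values bottom-up
through the tree, taking minima at OR-nodes, maxima at AND-nodes, and at SAND-nodes the value of
the last child unless (4b) or (4c) forces \<infinity>. This yields an exact time assignment. Along an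
order relation the completion times grow at least by the duration of the later BAS, so a SAND-node
reached by the attack never violates (4c), and every node reached by the attack gets a finite
value. The value of the root is then the completion time of some BAS of the attack, which is
bounded by the duration of a maximal chain containing that chain.\<close>

definition completion_time :: "'n set \<Rightarrow> ('n \<times> 'n) set \<Rightarrow> ('n \<Rightarrow> real) \<Rightarrow> 'n \<Rightarrow> real" where
  "completion_time A P d a =
     Max {sum d C | C. is_chain A P C \<and> a \<in> C \<and> (\<forall>x\<in>C. x \<noteq> a \<longrightarrow> (x, a) \<in> P)}"

lemma finite_durations:
  assumes "finite A" "\<And>C. Q C \<Longrightarrow> C \<subseteq> A"
  shows "finite {sum d C | C. Q C}"
proof -
  have "{sum d C | C. Q C} \<subseteq> sum d ` Pow A" using assms(2) by auto
  then show ?thesis using assms(1) finite_subset by blast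
qed

lemma finite_completion_durations:
  "finite A \<Longrightarrow> finite {sum d C | C. is_chain A P C \<and> a \<in> C \<and> (\<forall>x\<in>C. x \<noteq> a \<longrightarrow> (x, a) \<in> P)}"
  by (rule finite_durations) (auto simp: is_chain_def)

lemma completion_time_attained:
  assumes "finite A" "a \<in> A"
  obtains C where "is_chain A P C" "a \<in> C" "\<forall>x\<in>C. x \<noteq> a \<longrightarrow> (x, a) \<in> P"
    and "completion_time A P d a = sum d C"
proof -
  let ?S = "{sum d C | C. is_chain A P C \<and> a \<in> C \<and> (\<forall>x\<in>C. x \<noteq> a \<longrightarrow> (x, a) \<in> P)}"
  have "?S \<noteq> {}" using assms(2) by (auto simp: is_chain_def)
  then have "completion_time A P d a \<in> ?S"
    unfolding completion_time_def using finite_completion_durations[OF assms(1)] Max_in by blast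
  then show thesis using that by auto
qed

lemma chain_duration_le_completion_time:
  assumes "finite A" "is_chain A P C" "a \<in> C" "\<forall>x\<in>C. x \<noteq> a \<longrightarrow> (x, a) \<in> P"
  shows "sum d C \<le> completion_time A P d a"
  unfolding completion_time_def using assms finite_completion_durations[OF assms(1)]
  by (intro Max_ge) auto

lemma duration_le_completion_time:
  assumes "finite A" "a \<in> A"
  shows "d a \<le> completion_time A P d a"
  using chain_duration_le_completion_time[OF assms(1), of P "{a}" a d] assms
  by (auto simp: is_chain_def)

lemma completion_time_step:
  assumes "finite A" "strict_po_on A P" "a \<in> A" "(a, a') \<in> P"
  shows "completion_time A P d a + d a' \<le> completion_time A P d a'"
proof -
  obtain C where C: "is_chain A P C" "a \<in> C" "\<forall>x\<in>C. x \<noteq> a \<longrightarrow> (x, a) \<in> P"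
    and eq: "completion_time A P d a = sum d C"
    using completion_time_attained[OF assms(1,3)] .
  have "trans P" "irrefl P" "a' \<in> A"
    using assms(2,4) by (auto simp: strict_po_on_def)
  have below: "\<forall>x\<in>C. (x, a') \<in> P"
    using C(3) assms(4) \<open>trans P\<close> by (auto dest: transD)
  then have "a' \<notin> C" using \<open>irrefl P\<close> by (auto simp: irrefl_def)
  have "finite C" using C(1) assms(1) finite_subset by (auto simp: is_chain_def)
  have "is_chain A P (insert a' C)"
    using C(1) below \<open>a' \<in> A\<close> by (auto simp: is_chain_def)
  then have "sum d (insert a' C) \<le> completion_time A P d a'"
    by (rule chain_duration_le_completion_time[OF assms(1)]) (use below in auto)
  then show ?thesis using eq \<open>finite C\<close> \<open>a' \<notin> C\<close> by simp
qed

lemma ex_max_chain_superset: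
  assumes "finite A" "is_chain A P C"
  obtains C' where "is_max_chain A P C'" "C \<subseteq> C'"
proof -
  let ?S = "{C'. is_chain A P C' \<and> C \<subseteq> C'}"
  have "?S \<subseteq> Pow A" by (auto simp: is_chain_def)
  then have "finite ?S" using assms(1) finite_subset by blast
  moreover have "C \<in> ?S" using assms(2) by auto
  ultimately have "Max (card ` ?S) \<in> card ` ?S" by (intro Max_in) auto
  then obtain C' where C': "C' \<in> ?S" "card C' = Max (card ` ?S)" by auto
  have "is_max_chain A P C'"
    unfolding is_max_chain_def
  proof (intro conjI allI impI)
    show "is_chain A P C'" using C' by auto
    fix C'' assume C'': "is_chain A P C'' \<and> C' \<subseteq> C''"
    then have "card C'' \<le> card C'" using C' \<open>finite ?S\<close> by auto
    moreover have "finite C''" using C'' assms(1) finite_subset by (auto simp: is_chain_def)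
    ultimately show "C'' = C'" using C'' card_seteq by blast
  qed
  then show thesis using that C' by auto
qed

lemma completion_time_le_attack_time:
  assumes "finite A" "a \<in> A" "\<forall>x\<in>A. 0 \<le> d x"
  shows "completion_time A P d a \<le> attack_time A P d"
proof -
  obtain C where C: "is_chain A P C" and eq: "completion_time A P d a = sum d C"
    using completion_time_attained[OF assms(1,2)] by metis
  obtain C' where C': "is_max_chain A P C'" "C \<subseteq> C'"
    using ex_max_chain_superset[OF assms(1) C] .
  have "finite C'" using C' assms(1) finite_subset by (auto simp: is_max_chain_def is_chain_def)
  then have "sum d C \<le> sum d C'"
    using C' assms(3) by (intro sum_mono2) (auto simp: is_max_chain_def is_chain_def)
  also have "\<dots> \<le> Max {sum d C | C. is_max_chain A P C}"
    using C'(1) finite_durations[OF assms(1), of "is_max_chain A P" d]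
    by (intro Max_ge) (auto simp: is_max_chain_def is_chain_def)
  finally show ?thesis using eq assms(2) by (auto simp: attack_time_def)
qed

lemma finite_nodes: "dat N ch gam R \<Longrightarrow> finite N"
  unfolding dat_def by auto

lemma children_in_nodes: "dat N ch gam R \<Longrightarrow> v \<in> N \<Longrightarrow> set (ch v) \<subseteq> N"
  unfolding dat_def by auto

lemma BAS_iff_leaf: "dat N ch gam R \<Longrightarrow> v \<in> N \<Longrightarrow> gam v = BAS \<longleftrightarrow> ch v = []"
  unfolding dat_def by auto

lemma acyclic_edges: "dat N ch gam R \<Longrightarrow> acyclic (edges N ch)"
  unfolding dat_def by auto

lemma wf_edges_converse:
  assumes dat: "dat N ch gam R"
  shows "wf ((edges N ch)\<inverse>)"
proof (rule finite_acyclic_wf_converse[OF _ acyclic_edges[OF dat]])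
  have "edges N ch \<subseteq> N \<times> (\<Union>v\<in>N. set (ch v))" unfolding edges_def by auto
  moreover have "finite (N \<times> (\<Union>v\<in>N. set (ch v)))" using finite_nodes[OF dat] by auto
  ultimately show "finite (edges N ch)" by (rule finite_subset)
qed

lemma descendant_in_nodes:
  assumes dat: "dat N ch gam R" and "(v, w) \<in> (edges N ch)\<^sup>*" "v \<in> N"
  shows "w \<in> N"
  using assms(2,3)
  by (induction rule: rtrancl_induct) (auto simp: edges_def dest: children_in_nodes[OF dat])

lemma last_child_mem:
  assumes dat: "dat N ch gam R" and "v \<in> N" "gam v \<noteq> BAS"
  shows "last (ch v) \<in> set (ch v)"
  using BAS_iff_leaf[OF dat assms(2)] assms(3) by simp

text \<open>The leaf values fb are referred to directly in the test for (4c): by well-founded recursion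
only the values at the children are available, not those at the deeper BAS descendants.\<close>

definition propagate :: "'n set \<Rightarrow> ('n \<Rightarrow> 'n list) \<Rightarrow> ('n \<Rightarrow> gtype) \<Rightarrow> ('n \<Rightarrow> real)
    \<Rightarrow> ('n \<Rightarrow> ereal) \<Rightarrow> 'n \<Rightarrow> ereal" where
  "propagate N ch gam d fb = wfrec ((edges N ch)\<inverse>) (\<lambda>g v. if v \<in> N then (case gam v of
        BAS \<Rightarrow> fb v
      | OR \<Rightarrow> Min (g ` set (ch v))
      | AND \<Rightarrow> Max (g ` set (ch v))
      | SAND \<Rightarrow> if sand_inf_child ch g v \<or> sand_violation N ch gam d fb v then \<infinity>
                else g (last (ch v)))
    else 0)"

lemma propagate_unfold:
  assumes dat: "dat N ch gam R" and "v \<in> N"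
  shows "propagate N ch gam d fb v = (case gam v of
        BAS \<Rightarrow> fb v
      | OR \<Rightarrow> Min (propagate N ch gam d fb ` set (ch v))
      | AND \<Rightarrow> Max (propagate N ch gam d fb ` set (ch v))
      | SAND \<Rightarrow>
          if sand_inf_child ch (propagate N ch gam d fb) v \<or> sand_violation N ch gam d fb v
          then \<infinity> else propagate N ch gam d fb (last (ch v)))"
proof -
  let ?f = "propagate N ch gam d fb" and ?E = "(edges N ch)\<inverse>"
  have cut_children: "\<forall>c\<in>set (ch v). cut ?f ?E v c = ?f c"
    using assms(2) by (simp add: cut_apply edges_def)
  then have "cut ?f ?E v ` set (ch v) = ?f ` set (ch v)" by (auto simp: image_def)
  moreover have "sand_inf_child ch (cut ?f ?E v) v = sand_inf_child ch ?f v"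
    using cut_children by (simp add: sand_inf_child_def)
  ultimately show ?thesis
    using assms(2) cut_children last_child_mem[OF dat assms(2)]
    by (subst propagate_def, subst wfrec[OF wf_edges_converse[OF dat]], fold propagate_def[of N ch gam])
       (simp split: gtype.split)
qed

lemma propagate_BAS:
  "dat N ch gam R \<Longrightarrow> v \<in> N \<Longrightarrow> gam v = BAS \<Longrightarrow> propagate N ch gam d fb v = fb v"
  by (simp add: propagate_unfold)

lemma propagate_OR: "dat N ch gam R \<Longrightarrow> v \<in> N \<Longrightarrow> gam v = OR \<Longrightarrow>
    propagate N ch gam d fb v = Min (propagate N ch gam d fb ` set (ch v))"
  by (simp add: propagate_unfold)

lemma propagate_AND: "dat N ch gam R \<Longrightarrow> v \<in> N \<Longrightarrow> gam v = AND \<Longrightarrow>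
    propagate N ch gam d fb v = Max (propagate N ch gam d fb ` set (ch v))"
  by (simp add: propagate_unfold)

lemma propagate_SAND: "dat N ch gam R \<Longrightarrow> v \<in> N \<Longrightarrow> gam v = SAND \<Longrightarrow>
    propagate N ch gam d fb v =
      (if sand_inf_child ch (propagate N ch gam d fb) v \<or> sand_violation N ch gam d fb v then \<infinity>
       else propagate N ch gam d fb (last (ch v)))"
  by (simp add: propagate_unfold)

lemma sand_violation_propagate:
  assumes dat: "dat N ch gam R" and "v \<in> N"
  shows "sand_violation N ch gam d (propagate N ch gam d fb) v \<longleftrightarrow> sand_violation N ch gam d fb v"
proof -
  have "propagate N ch gam d fb b = fb b"
    if "i < length (ch v)" "b \<in> Bdesc N ch gam (ch v ! i)" for i b
  proof -
    have "ch v ! i \<in> N" using that(1) children_in_nodes[OF dat assms(2)] nth_mem by blast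
    then show ?thesis
      using that(2) descendant_in_nodes[OF dat] propagate_BAS[OF dat] by (auto simp: Bdesc_def)
  qed
  then show ?thesis unfolding sand_violation_def by (metis Suc_lessD)
qed

lemma propagate_leaf_value:
  assumes dat: "dat N ch gam R" and "v \<in> N"
  shows "propagate N ch gam d fb v = \<infinity> \<or>
    (\<exists>b\<in>N. gam b = BAS \<and> propagate N ch gam d fb v = fb b)"
  using wf_edges_converse[OF dat] assms(2)
proof (induction v rule: wf_induct_rule)
  case (less v)
  let ?f = "propagate N ch gam d fb"
  have IH: "?f c = \<infinity> \<or> (\<exists>b\<in>N. gam b = BAS \<and> ?f c = fb b)" if "c \<in> set (ch v)" for c
    using less that children_in_nodes[OF dat less.prems] by (auto simp: edges_def)
  show ?case
  proof (cases "gam v = BAS")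
    case True
    then show ?thesis using propagate_BAS[OF dat less.prems] less.prems by auto
  next
    case False
    then have "ch v \<noteq> []" using BAS_iff_leaf[OF dat less.prems] by simp
    then have "?f v \<in> ?f ` set (ch v) \<union> {\<infinity>}"
      using False propagate_unfold[OF dat less.prems] last_child_mem[OF dat less.prems False]
      by (auto split: gtype.splits)
    then show ?thesis using IH by fastforce
  qed
qed

lemma exact_time_assignment_propagate:
  assumes dat: "dat N ch gam R" and "is_duration N gam d"
    and leaf_ge: "\<forall>b\<in>N. gam b = BAS \<longrightarrow> ereal (d b) \<le> fb b"
  shows "exact_time_assignment N ch gam d (propagate N ch gam d fb)"
proof -
  have nonneg: "0 \<le> propagate N ch gam d fb v" if "v \<in> N" for v
    using propagate_leaf_value[OF dat that, of d fb] assms(2) leaf_ge unfolding is_duration_def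
    by (auto intro: order_trans[OF ereal_less_eq(5)[THEN iffD2]])
  show ?thesis
    unfolding exact_time_assignment_def time_assignment_def
    using nonneg leaf_ge propagate_BAS[OF dat] propagate_OR[OF dat] propagate_AND[OF dat]
      propagate_SAND[OF dat, of _ d fb] sand_violation_propagate[OF dat, of _ d fb]
    by (auto simp: sand_inf_child_def)
qed

lemma no_sand_violation_if_respects_order:
  assumes dat: "dat N ch gam R" and "v \<in> N"
    and ordered: "\<forall>i. Suc i < length (ch v) \<longrightarrow>
      (\<forall>a\<in>A \<inter> Bdesc N ch gam (ch v ! i). \<forall>a'\<in>A \<inter> Bdesc N ch gam (ch v ! Suc i). (a, a') \<in> P)"
    and infinite_off_A: "\<forall>b\<in>N. gam b = BAS \<longrightarrow> b \<notin> A \<longrightarrow> fb b = \<infinity>"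
    and respects_order: "\<forall>(a, a')\<in>P. fb a + ereal (d a') \<le> fb a'"
  shows "\<not> sand_violation N ch gam d fb v"
proof
  assume "sand_violation N ch gam d fb v"
  then obtain i a a' where i: "Suc i < length (ch v)"
    and a: "a \<in> Bdesc N ch gam (ch v ! i)" and a': "a' \<in> Bdesc N ch gam (ch v ! Suc i)"
    and lt: "fb a' - ereal (d a') < fb a" "fb a < \<infinity>"
    unfolding sand_violation_def by blast
  have "ch v ! Suc i \<in> N" "ch v ! i \<in> N"
    using i children_in_nodes[OF dat assms(2)] by (auto dest: Suc_lessD)
  then have "a \<in> N" "gam a = BAS" "a' \<in> N" "gam a' = BAS"
    using a a' descendant_in_nodes[OF dat] by (auto simp: Bdesc_def)
  then have "a \<in> A" "a' \<in> A" using lt infinite_off_A by force+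
  then have "fb a + ereal (d a') \<le> fb a'" using ordered i a a' respects_order by blast
  then show False using lt by (cases "fb a"; cases "fb a'") auto
qed

theorem mainTheorem7:
  fixes N :: "'n set" and ch :: "'n \<Rightarrow> 'n list" and gam :: "'n \<Rightarrow> gtype" and R :: 'n
    and d :: "'n \<Rightarrow> real" and A :: "'n set" and P :: "('n \<times> 'n) set"
  assumes "dat N ch gam R"
    and "is_duration N gam d"
    and "successful N ch gam R A P"
  shows "\<exists>f. exact_time_assignment N ch gam d f \<and> f R \<le> ereal (attack_time A P d)"
proof -
  have "A \<subseteq> N" and A_BAS: "\<forall>a\<in>A. gam a = BAS" and "strict_po_on A P"
    and "reaches N ch gam A P R"
    using assms(3) unfolding successful_def is_attack_def by auto
  have "finite A" using \<open>A \<subseteq> N\<close> finite_nodes[OF assms(1)] finite_subset by blast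
  have d_nonneg: "\<forall>a\<in>A. 0 \<le> d a"
    using assms(2) \<open>A \<subseteq> N\<close> A_BAS unfolding is_duration_def by auto
  define fb where "fb a = (if a \<in> A then ereal (completion_time A P d a) else \<infinity>)" for a
  have leaf_ge: "\<forall>b\<in>N. gam b = BAS \<longrightarrow> ereal (d b) \<le> fb b"
    by (auto simp: fb_def duration_le_completion_time[OF \<open>finite A\<close>])
  have respects_order: "\<forall>(a, a')\<in>P. fb a + ereal (d a') \<le> fb a'"
  proof (intro ballI, clarify)
    fix a a' assume "(a, a') \<in> P"
    then have "a \<in> A" "a' \<in> A" using \<open>strict_po_on A P\<close> by (auto simp: strict_po_on_def)
    then show "fb a + ereal (d a') \<le> fb a'"
      using completion_time_step[OF \<open>finite A\<close> \<open>strict_po_on A P\<close> _ \<open>(a, a') \<in> P\<close>]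
      by (simp add: fb_def)
  qed
  let ?f = "propagate N ch gam d fb"
  have "exact_time_assignment N ch gam d ?f"
    using exact_time_assignment_propagate[OF assms(1,2) leaf_ge] .
  moreover have "?f v \<noteq> \<infinity>" if "reaches N ch gam A P v" for v
    using that
  proof (induction rule: reaches.induct)
    case (reach_BAS v)
    then show ?case using propagate_BAS[OF assms(1)] by (simp add: fb_def)
  next
    case (reach_OR v c)
    then have "Min (?f ` set (ch v)) \<le> ?f c" by (intro Min_le) auto
    then show ?case using propagate_OR[OF assms(1) reach_OR(1,2)] reach_OR.IH by auto
  next
    case (reach_AND v)
    then have "ch v \<noteq> []" using BAS_iff_leaf[OF assms(1) reach_AND(1)] by auto
    then have "Max (?f ` set (ch v)) \<in> ?f ` set (ch v)" by (intro Max_in) auto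
    then show ?case using propagate_AND[OF assms(1) reach_AND(1,2)] reach_AND.IH by auto
  next
    case (reach_SAND v)
    have "\<not> sand_violation N ch gam d fb v"
      by (rule no_sand_violation_if_respects_order[OF assms(1) reach_SAND(1) _ _ respects_order])
         (use reach_SAND.hyps in \<open>auto simp: fb_def\<close>)
    then show ?case
      using propagate_SAND[OF assms(1) reach_SAND(1,2)] reach_SAND.IH
        last_child_mem[OF assms(1) reach_SAND(1)] reach_SAND(2)
      by (auto simp: sand_inf_child_def)
  qed
  then have "?f R \<noteq> \<infinity>" using \<open>reaches N ch gam A P R\<close> by blast
  then obtain a where "a \<in> A" "?f R = ereal (completion_time A P d a)"
    using propagate_leaf_value[OF assms(1), of R d fb] assms(1) unfolding dat_def fb_def
    by (auto split: if_splits)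
  then have "?f R \<le> ereal (attack_time A P d)"
    using completion_time_le_attack_time[OF \<open>finite A\<close> _ d_nonneg] by simp
  ultimately show ?thesis by blast
qed

end
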